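(* For the hop-constrained minimum spanning tree problem (HMSTP), i.e. the HSTP with $R=V$, the partial-ordering model (P-HSTP) is strictly stronger than the assignment model (A-HSTP): for every HMSTP instance $\nu_{\text{P-HSTP}}\ge\nu_{\text{A-HSTP}}$, and there exist HMSTP instances for which this inequality is strict.
   Context: HMSTP instance: a complete undirected graph $G=(V,E)$ with edge costs $c:E\to\mathbb{R}_{>0}$, a root $r\in V$, a hop limit $H\ge1$, and terminal set $R=V$. For every ordered pair $(u,v)$ of distinct nodes there is a variable $x_{u,v}$. Common $x$-constraints: (X1) $\sum_{u\neq v}x_{u,v}\le1$ for all $v\in V$; (X2) $\sum_{u\in V\setminus\{v,w\}}x_{u,v}\ge x_{v,w}$ for all $v\in V\setminus\{r\}$, $w\neq v$; (X3) $0\le x_{u,v}\le1$; (X4) $\sum_{u\neq v}x_{u,v}\ge1$ for all $v\in R\setminus\{r\}$. $\mathcal{P}^{HSTP}$: all $(x,l,g)$ (with $l_{v,i},g_{i,v}$ for $v\in V$, $i=0,\dots,H$) satisfying (X1)–(X4) and $l_{r,0}=g_{0,r}=0$; $l_{v,1}=g_{H,v}=0$ for $v\neq r$; $l_{v,i}\le l_{v,i+1}$ and $g_{i,v}+l_{v,i+1}=1$ for $v\in V$, $i=0,\dots,H-1$; $l_{u,i}+g_{i,v}\ge x_{u,v}$ for $u\neq v$, $i=0,\dots,H$; $0\le l,g\le1$. $\mathcal{A}^{HSTP}$: all $(x,y)$ (with $y_{v,i}$ for $v\in V$, $i=0,\dots,H$) satisfying (X1)–(X4) and $y_{r,0}=1$;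 $y_{r,i}=0$ for $i\ge1$; $y_{v,0}=0$ and $\sum_{i=1}^Hy_{v,i}=1$ for $v\neq r$; $y_{u,i}-y_{v,i+1}+x_{u,v}\le1$ for $u\neq v$, $i=0,\dots,H-1$; $y_{u,H}+x_{u,v}\le1$ for $u\neq v$; $0\le y\le1$. (A-HSTP) and (P-HSTP) minimize $\sum_{uv\in E}c_{uv}(x_{u,v}+x_{v,u})$ over the integral points of $\mathcal{A}^{HSTP}$ and $\mathcal{P}^{HSTP}$ respectively. $\nu_M$ is the optimal value of the LP relaxation of ILP $M$. For a minimization problem, model $A$ is strictly stronger than $B$ if $\nu_A\ge\nu_B$ on all instances and strict inequality holds for some instance. *)

theory Defs
  imports Complex_Main
begin

text \<open>HMSTP instance: complete graph on finite vertex set V, edge costs c on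
  two-element sets {u,v}, root r, hop limit H, terminal set R = V.
  x u v is the arc variable x_{u,v}; l v i = l_{v,i}; g i v = g_{i,v}; y v i = y_{v,i}.\<close>

definition hmstp_instance :: "'a set \<Rightarrow> ('a set \<Rightarrow> real) \<Rightarrow> 'a \<Rightarrow> nat \<Rightarrow> bool" where
  "hmstp_instance V c r H \<longleftrightarrow> finite V \<and> r \<in> V \<and> H \<ge> 1 \<and>
     (\<forall>u\<in>V. \<forall>v\<in>V. u \<noteq> v \<longrightarrow> c {u, v} > 0)"

definition x_constraints :: "'a set \<Rightarrow> 'a \<Rightarrow> ('a \<Rightarrow> 'a \<Rightarrow> real) \<Rightarrow> bool" where
  "x_constraints V r x \<longleftrightarrow>
     (\<forall>v\<in>V. (\<Sum>u\<in>V - {v}. x u v) \<le> 1) \<and>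
     (\<forall>v\<in>V - {r}. \<forall>w\<in>V - {v}. (\<Sum>u\<in>V - {v, w}. x u v) \<ge> x v w) \<and>
     (\<forall>u\<in>V. \<forall>v\<in>V. u \<noteq> v \<longrightarrow> 0 \<le> x u v \<and> x u v \<le> 1) \<and>
     (\<forall>v\<in>V - {r}. (\<Sum>u\<in>V - {v}. x u v) \<ge> 1)"

definition P_HSTP :: "'a set \<Rightarrow> 'a \<Rightarrow> nat \<Rightarrow> ('a \<Rightarrow> 'a \<Rightarrow> real) \<Rightarrow>
    ('a \<Rightarrow> nat \<Rightarrow> real) \<Rightarrow> (nat \<Rightarrow> 'a \<Rightarrow> real) \<Rightarrow> bool" where
  "P_HSTP V r H x l g \<longleftrightarrow> x_constraints V r x \<and>
     l r 0 = 0 \<and> g 0 r = 0 \<and>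
     (\<forall>v\<in>V - {r}. l v 1 = 0 \<and> g H v = 0) \<and>
     (\<forall>v\<in>V. \<forall>i<H. l v i \<le> l v (i + 1) \<and> g i v + l v (i + 1) = 1) \<and>
     (\<forall>u\<in>V. \<forall>v\<in>V. u \<noteq> v \<longrightarrow> (\<forall>i\<le>H. l u i + g i v \<ge> x u v)) \<and>
     (\<forall>v\<in>V. \<forall>i\<le>H. 0 \<le> l v i \<and> l v i \<le> 1 \<and> 0 \<le> g i v \<and> g i v \<le> 1)"

definition A_HSTP :: "'a set \<Rightarrow> 'a \<Rightarrow> nat \<Rightarrow> ('a \<Rightarrow> 'a \<Rightarrow> real) \<Rightarrow>
    ('a \<Rightarrow> nat \<Rightarrow> real) \<Rightarrow> bool" where
  "A_HSTP V r H x y \<longleftrightarrow> x_constraints V r x \<and>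
     y r 0 = 1 \<and> (\<forall>i\<in>{1..H}. y r i = 0) \<and>
     (\<forall>v\<in>V - {r}. y v 0 = 0 \<and> (\<Sum>i=1..H. y v i) = 1) \<and>
     (\<forall>u\<in>V. \<forall>v\<in>V. u \<noteq> v \<longrightarrow>
        (\<forall>i<H. y u i - y v (i + 1) + x u v \<le> 1) \<and> y u H + x u v \<le> 1) \<and>
     (\<forall>v\<in>V. \<forall>i\<le>H. 0 \<le> y v i \<and> y v i \<le> 1)"

text \<open>Objective: sum over edges uv of c_uv (x_{u,v} + x_{v,u}), written as a sum over
  ordered pairs of distinct nodes (each edge is counted once per orientation).\<close>
definition hstp_cost :: "'a set \<Rightarrow> ('a set \<Rightarrow> real) \<Rightarrow> ('a \<Rightarrow> 'a \<Rightarrow> real) \<Rightarrow> real" where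
  "hstp_cost V c x = (\<Sum>(u, v)\<in>{(u, v). u \<in> V \<and> v \<in> V \<and> u \<noteq> v}. c {u, v} * x u v)"

definition nu_P :: "'a set \<Rightarrow> ('a set \<Rightarrow> real) \<Rightarrow> 'a \<Rightarrow> nat \<Rightarrow> real" where
  "nu_P V c r H = Inf {hstp_cost V c x | x l g. P_HSTP V r H x l g}"

definition nu_A :: "'a set \<Rightarrow> ('a set \<Rightarrow> real) \<Rightarrow> 'a \<Rightarrow> nat \<Rightarrow> real" where
  "nu_A V c r H = Inf {hstp_cost V c x | x y. A_HSTP V r H x y}"

end

theory Submission
  imports Defs
begin

(* Every LP point (x, l, g) of the partial-ordering model projects to an LP point (x, y) of the
   assignment model with the same x, so nu_A <= nu_P.  The depth distribution y of a non-root
   node v is built level by level: level i + 1 receives the least weight forced by the arc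
   constraints y u i - y v (i + 1) + x u v <= 1, raised if necessary so that the capacities
   1 - l v k of the levels k > i + 1 can still complete the total weight to 1.  The ordering
   constraints bound the forced weight at level i + 1 by 1 - l v (i + 1), and the in-degree
   equation bounds the total forced weight by 1, so the total never exceeds 1.

   For hop limit 2 the ordering model implies x u v + x v w <= 1 for non-root u and v (a node
   with a non-root parent is a leaf).  A fractional assignment point on four nodes violates
   this and is cheaper than every point of the ordering model. *)

lemma sum_max_0_diff_le:
  fixes a :: "'b \<Rightarrow> real"
  assumes "finite S" and "\<And>j. j \<in> S \<Longrightarrow> 0 \<le> a j" and "0 \<le> d"
  shows "(\<Sum>j\<in>S. max 0 (a j - d)) \<le> max 0 ((\<Sum>j\<in>S. a j) - d)"
  using assms
proof (induction S rule: finite_induct)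
  case empty
  then show ?case by simp
next
  case (insert k S)
  then have "(\<Sum>j\<in>S. max 0 (a j - d)) \<le> max 0 ((\<Sum>j\<in>S. a j) - d)"
    and "0 \<le> a k" and "0 \<le> (\<Sum>j\<in>S. a j)"
    by (auto intro: sum_nonneg)
  moreover have "max 0 (a k - d) + max 0 ((\<Sum>j\<in>S. a j) - d) \<le> max 0 (a k + (\<Sum>j\<in>S. a j) - d)"
    using calculation(2,3) \<open>0 \<le> d\<close> by (simp add: max_def)
  ultimately show ?case
    using insert(1,2) by simp
qed

lemma greedy_cumulative_le_one:
  fixes C f T :: "nat \<Rightarrow> real"
  assumes C_0: "C 0 = 0"
    and C_Suc: "\<And>j. C (Suc j) = max (C j + f j) (1 - T (Suc j))"
    and tail: "\<And>j. j < k \<Longrightarrow> (\<Sum>m\<in>{Suc j..<k}. f m) \<le> T (Suc j)"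
    and total: "(\<Sum>j<k. f j) \<le> 1"
  shows "C k \<le> 1"
proof -
  have "C i + (\<Sum>j\<in>{i..<k}. f j) \<le> 1" if "i \<le> k" for i
    using that
  proof (induction i)
    case 0
    then show ?case using C_0 total by (simp add: atLeast0LessThan)
  next
    case (Suc i)
    then have "C i + f i + (\<Sum>j\<in>{Suc i..<k}. f j) \<le> 1"
      by (simp add: sum.atLeast_Suc_lessThan add.assoc)
    with tail[of i] Suc.prems show ?case
      by (simp add: C_Suc max_def)
  qed
  from this[of k] show ?thesis by simp
qed

locale P_HSTP_point =
  fixes V :: "'a set" and r :: 'a and H :: nat and x :: "'a \<Rightarrow> 'a \<Rightarrow> real"
    and l :: "'a \<Rightarrow> nat \<Rightarrow> real" and g :: "nat \<Rightarrow> 'a \<Rightarrow> real"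
  assumes finite_V: "finite V" and root_in_V: "r \<in> V" and hop_limit_pos: "1 \<le> H"
    and feasible: "P_HSTP V r H x l g"
begin

lemma x_feasible: "x_constraints V r x"
  using feasible by (simp add: P_HSTP_def)

lemma arc_bounds: "u \<in> V \<Longrightarrow> v \<in> V \<Longrightarrow> u \<noteq> v \<Longrightarrow> 0 \<le> x u v \<and> x u v \<le> 1"
  using x_feasible unfolding x_constraints_def by blast

lemma indegree_eq_one:
  assumes "v \<in> V - {r}"
  shows "(\<Sum>u\<in>V - {v}. x u v) = 1"
proof -
  have "(\<Sum>u\<in>V - {v}. x u v) \<le> 1" and "1 \<le> (\<Sum>u\<in>V - {v}. x u v)"
    using x_feasible assms unfolding x_constraints_def by auto
  then show ?thesis by simp
qed

lemma l_bounds: "v \<in> V \<Longrightarrow> i \<le> H \<Longrightarrow> 0 \<le> l v i \<and> l v i \<le> 1"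
  using feasible unfolding P_HSTP_def by blast

lemma l_nonroot_1: "v \<in> V - {r} \<Longrightarrow> l v 1 = 0"
  using feasible by (simp add: P_HSTP_def)

lemma l_mono_step: "v \<in> V \<Longrightarrow> i < H \<Longrightarrow> l v i \<le> l v (Suc i)"
  using feasible unfolding P_HSTP_def by simp

lemma arc_le_level_step:
  assumes "u \<in> V" "v \<in> V" "u \<noteq> v" "i < H"
  shows "x u v \<le> l u i + 1 - l v (Suc i)"
proof -
  have "g i v + l v (Suc i) = 1" and "x u v \<le> l u i + g i v"
    using feasible assms unfolding P_HSTP_def by auto
  then show ?thesis by simp
qed

lemma no_arc_into_root:
  assumes u: "u \<in> V - {r}"
  shows "x u r = 0"
proof -
  have "x u r \<le> l u 0 + g 0 r" and "g 0 r = 0"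
    using feasible u root_in_V unfolding P_HSTP_def by blast+
  moreover have "l u 0 \<le> l u 1"
    using l_mono_step[of u 0] u hop_limit_pos by simp
  ultimately show ?thesis using l_nonroot_1[OF u] arc_bounds[of u r] u root_in_V by auto
qed

lemma arc_le_level_H:
  assumes "u \<in> V - {r}" "v \<in> V" "u \<noteq> v"
  shows "x u v \<le> l u H"
proof (cases "v = r")
  case True
  then show ?thesis using assms no_arc_into_root l_bounds[of u H] by simp
next
  case False
  then have "x u v \<le> l u H + g H v" and "g H v = 0"
    using feasible assms unfolding P_HSTP_def by blast+
  then show ?thesis by simp
qed

definition capacity_above :: "nat \<Rightarrow> 'a \<Rightarrow> real" where
  "capacity_above i v = (\<Sum>j\<in>{i..<H}. 1 - l v (Suc j))"

definition forced_weight :: "('a \<Rightarrow> real) \<Rightarrow> 'a \<Rightarrow> real" where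
  "forced_weight w v = Max (insert 0 ((\<lambda>u. w u + x u v - 1) ` (V - {v})))"

fun level_weight :: "nat \<Rightarrow> 'a \<Rightarrow> real" where
  "level_weight 0 v = (if v = r then 1 else 0)"
| "level_weight (Suc i) v = (if v = r then 0 else
     max (forced_weight (level_weight i) v)
         (1 - (\<Sum>j\<le>i. level_weight j v) - capacity_above (Suc i) v))"

definition cum_weight :: "nat \<Rightarrow> 'a \<Rightarrow> real" where
  "cum_weight i v = (\<Sum>j\<le>i. level_weight j v)"

abbreviation forced :: "nat \<Rightarrow> 'a \<Rightarrow> real" where
  "forced i \<equiv> forced_weight (level_weight i)"

lemma capacity_above_nonneg: "v \<in> V \<Longrightarrow> 0 \<le> capacity_above i v"
  unfolding capacity_above_def using l_bounds by (auto intro!: sum_nonneg)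

lemma capacity_above_H: "capacity_above H v = 0"
  by (simp add: capacity_above_def)

lemma capacity_above_split: "i < H \<Longrightarrow> capacity_above i v = (1 - l v (Suc i)) + capacity_above (Suc i) v"
  unfolding capacity_above_def by (simp add: sum.atLeast_Suc_lessThan)

lemma forced_weight_nonneg: "0 \<le> forced_weight w v"
  unfolding forced_weight_def using finite_V by (auto intro: Max_ge)

lemma forced_weight_ge: "u \<in> V - {v} \<Longrightarrow> w u + x u v - 1 \<le> forced_weight w v"
  unfolding forced_weight_def using finite_V by (auto intro: Max_ge)

lemma forced_weight_le:
  assumes "0 \<le> b" and "\<And>u. u \<in> V - {v} \<Longrightarrow> w u + x u v - 1 \<le> b"
  shows "forced_weight w v \<le> b"
  unfolding forced_weight_def using finite_V assms by (subst Max_le_iff) auto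

lemma forced_weight_le_sum: "forced_weight w v \<le> (\<Sum>u\<in>V - {v}. max 0 (w u + x u v - 1))"
proof (rule forced_weight_le)
  show "0 \<le> (\<Sum>u\<in>V - {v}. max 0 (w u + x u v - 1))"
    by (simp add: sum_nonneg)
  fix u assume "u \<in> V - {v}"
  then have "max 0 (w u + x u v - 1) \<le> (\<Sum>u\<in>V - {v}. max 0 (w u + x u v - 1))"
    using finite_V by (intro member_le_sum) auto
  then show "w u + x u v - 1 \<le> (\<Sum>u\<in>V - {v}. max 0 (w u + x u v - 1))" by simp
qed

lemma level_weight_root: "level_weight i r = (if i = 0 then 1 else 0)"
  by (cases i) simp_all

lemma level_weight_nonneg: "0 \<le> level_weight i v"
  by (cases i) (auto simp: forced_weight_nonneg intro: max.coboundedI1)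

lemma cum_weight_root: "cum_weight i r = 1"
  unfolding cum_weight_def by (induction i) (simp_all add: level_weight_root)

lemma cum_weight_0: "v \<noteq> r \<Longrightarrow> cum_weight 0 v = 0"
  by (simp add: cum_weight_def)

lemma cum_weight_Suc:
  "v \<noteq> r \<Longrightarrow> cum_weight (Suc i) v = max (cum_weight i v + forced i v) (1 - capacity_above (Suc i) v)"
  unfolding cum_weight_def by (simp add: max_def)

lemma cum_plus_capacity_ge_one:
  assumes v: "v \<in> V - {r}" and "i < H"
  shows "1 \<le> cum_weight i v + capacity_above i v"
proof (cases i)
  case 0
  with assms capacity_above_split[of 0 v] show ?thesis
    using l_nonroot_1[OF v] capacity_above_nonneg[of v 1] by (simp add: cum_weight_0)
next
  case (Suc j)
  with v show ?thesis by (simp add: cum_weight_Suc)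
qed

lemma forced_le_capacity:
  assumes "i < H" and v: "v \<in> V - {r}"
    and weight_le: "\<And>u. 1 \<le> i \<Longrightarrow> u \<in> V - {r} \<Longrightarrow> level_weight i u \<le> 1 - l u i"
  shows "forced i v \<le> 1 - l v (Suc i)"
proof (rule forced_weight_le)
  show "0 \<le> 1 - l v (Suc i)" using l_bounds v \<open>i < H\<close> by simp
  fix u assume u: "u \<in> V - {v}"
  have "x u v \<le> l u i + 1 - l v (Suc i)"
    using arc_le_level_step u v \<open>i < H\<close> by simp
  moreover have "level_weight i u \<le> 1 - l u i"
  proof (cases "u = r")
    case True
    have "l r 0 = 0" "l r i \<le> 1" using feasible l_bounds root_in_V \<open>i < H\<close> by (auto simp: P_HSTP_def)
    then show ?thesis using True by (simp add: level_weight_root)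
  next
    case False
    then show ?thesis
      using weight_le u l_bounds[of u 0] feasible by (cases i) auto
  qed
  ultimately show "level_weight i u + x u v - 1 \<le> 1 - l v (Suc i)" by simp
qed

lemma forced_sum_le_one:
  assumes v: "v \<in> V - {r}" and cum_le: "\<And>u. u \<in> V - {r} \<Longrightarrow> cum_weight i u \<le> 1"
  shows "(\<Sum>j\<le>i. forced j v) \<le> 1"
proof -
  have "(\<Sum>j\<le>i. forced j v) \<le> (\<Sum>j\<le>i. \<Sum>u\<in>V - {v}. max 0 (level_weight j u - (1 - x u v)))"
    by (intro sum_mono order.trans[OF forced_weight_le_sum]) (simp add: algebra_simps)
  also have "\<dots> = (\<Sum>u\<in>V - {v}. \<Sum>j\<le>i. max 0 (level_weight j u - (1 - x u v)))"
    by (rule sum.swap)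
  also have "\<dots> \<le> (\<Sum>u\<in>V - {v}. x u v)"
  proof (rule sum_mono)
    fix u assume u: "u \<in> V - {v}"
    have x: "0 \<le> x u v" "x u v \<le> 1" using arc_bounds u v by auto
    have "cum_weight i u \<le> 1"
      using cum_le u cum_weight_root by (cases "u = r") auto
    then have "max 0 ((\<Sum>j\<le>i. level_weight j u) - (1 - x u v)) \<le> x u v"
      using x by (simp add: cum_weight_def)
    with sum_max_0_diff_le[of "{..i}" "\<lambda>j. level_weight j u" "1 - x u v"] x
    show "(\<Sum>j\<le>i. max 0 (level_weight j u - (1 - x u v))) \<le> x u v"
      by (simp add: level_weight_nonneg)
  qed
  also have "\<dots> = 1" using indegree_eq_one v by simp
  finally show ?thesis .
qed

lemma cum_weight_le_one:
  assumes "k \<le> H" and v: "v \<in> V - {r}"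
    and forced_le: "\<And>j. j < k \<Longrightarrow> forced j v \<le> 1 - l v (Suc j)"
    and forced_total: "(\<Sum>j<k. forced j v) \<le> 1"
  shows "cum_weight k v \<le> 1"
proof (rule greedy_cumulative_le_one[where f = "\<lambda>j. forced j v" and T = "\<lambda>j. capacity_above j v"])
  show "cum_weight 0 v = 0" using v by (simp add: cum_weight_0)
  show "cum_weight (Suc j) v = max (cum_weight j v + forced j v) (1 - capacity_above (Suc j) v)" for j
    using v by (simp add: cum_weight_Suc)
  show "(\<Sum>m\<in>{Suc j..<k}. forced m v) \<le> capacity_above (Suc j) v" for j
  proof -
    have "(\<Sum>m\<in>{Suc j..<k}. forced m v) \<le> (\<Sum>m\<in>{Suc j..<k}. 1 - l v (Suc m))"
      using forced_le by (intro sum_mono) auto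
    also have "\<dots> \<le> capacity_above (Suc j) v"
      unfolding capacity_above_def using l_bounds v \<open>k \<le> H\<close> by (intro sum_mono2) auto
    finally show ?thesis .
  qed
qed (rule forced_total)

lemma level_weight_bounds:
  assumes "i \<le> H" and "v \<in> V - {r}"
  shows "cum_weight i v \<le> 1 \<and> (1 \<le> i \<longrightarrow> level_weight i v \<le> 1 - l v i)"
  using assms
proof (induction i arbitrary: v rule: less_induct)
  case (less i)
  show ?case
  proof (cases i)
    case 0
    with less.prems show ?thesis by (simp add: cum_weight_0)
  next
    case (Suc k)
    have forced_le: "forced j w \<le> 1 - l w (Suc j)" if "j \<le> k" "w \<in> V - {r}" for j w
    proof (rule forced_le_capacity)
      show "j < H" using that less.prems Suc by simp
      show "level_weight j u \<le> 1 - l u j" if "1 \<le> j" "u \<in> V - {r}" for u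
        using less.IH[of j u] \<open>j \<le> k\<close> Suc less.prems that by simp
    qed fact
    have "(\<Sum>j\<le>k. forced j v) \<le> 1"
    proof (rule forced_sum_le_one)
      show "cum_weight k u \<le> 1" if "u \<in> V - {r}" for u
        using less.IH[of k u] Suc less.prems that by simp
    qed fact
    then have "cum_weight (Suc k) v \<le> 1"
      using cum_weight_le_one[of "Suc k" v] forced_le less.prems Suc
      by (simp add: lessThan_Suc_atMost less_Suc_eq_le)
    moreover have "level_weight (Suc k) v \<le> 1 - l v (Suc k)"
      using forced_le[of k v] cum_plus_capacity_ge_one[of v k] capacity_above_split[of k v]
        less.prems Suc by (simp add: cum_weight_def)
    ultimately show ?thesis using Suc by simp
  qed
qed

lemma level_weight_le_one: "v \<in> V \<Longrightarrow> i \<le> H \<Longrightarrow> level_weight i v \<le> 1"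
  using level_weight_bounds[of i v] l_bounds[of v i]
  by (cases "v = r"; cases i) (auto simp: level_weight_root)

lemma cum_weight_H: "v \<in> V - {r} \<Longrightarrow> cum_weight H v = 1"
  using level_weight_bounds[of H v] cum_weight_Suc[of v "H - 1"] hop_limit_pos
  by (simp add: capacity_above_H)

theorem A_HSTP_level_weight: "A_HSTP V r H x (\<lambda>v i. level_weight i v)"
  unfolding A_HSTP_def
proof (intro conjI ballI allI impI)
  show "x_constraints V r x" by (rule x_feasible)
  show "(\<Sum>i = 1..H. level_weight i v) = 1" if "v \<in> V - {r}" for v
    using cum_weight_H[OF that] that
    by (simp add: cum_weight_def atMost_atLeast0 sum.atLeast_Suc_atMost)
  fix u v assume uv: "u \<in> V" "v \<in> V" "u \<noteq> v"
  show "level_weight i u - level_weight (i + 1) v + x u v \<le> 1" if "i < H" for i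
  proof (cases "v = r")
    case True
    then show ?thesis using no_arc_into_root level_weight_le_one uv that by simp
  next
    case False
    then show ?thesis using forced_weight_ge[of u v "level_weight i"] uv by simp
  qed
  show "level_weight H u + x u v \<le> 1"
  proof (cases "u = r")
    case True
    then show ?thesis using arc_bounds uv hop_limit_pos by (simp add: level_weight_root)
  next
    case False
    then show ?thesis
      using level_weight_bounds[of H u] arc_le_level_H[of u v] uv hop_limit_pos by simp
  qed
qed (use level_weight_le_one level_weight_nonneg in \<open>simp_all add: level_weight_root\<close>)

lemma arc_pair_le_one:
  assumes "H = 2" and "u \<in> V - {r}" "v \<in> V - {r}" "w \<in> V" "u \<noteq> v" "w \<noteq> v"
  shows "x u v + x v w \<le> 1"
  using arc_le_level_step[of u v 1] arc_le_level_H[of v w] l_nonroot_1[of u] assms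
  by (simp add: numeral_2_eq_2)

end

lemma P_HSTP_imp_A_HSTP:
  assumes "finite V" "r \<in> V" "1 \<le> H" "P_HSTP V r H x l g"
  shows "\<exists>y. A_HSTP V r H x y"
proof -
  interpret P_HSTP_point V r H x l g using assms by unfold_locales
  have "A_HSTP V r H x (\<lambda>v i. level_weight i v)" by (rule A_HSTP_level_weight)
  then show ?thesis by blast
qed

lemma P_HSTP_feasible:
  assumes "finite V" "r \<in> V" "1 \<le> H"
  shows "\<exists>x l g. P_HSTP V r H x l g"
proof (intro exI)
  let ?x = "\<lambda>u v. if u = r \<and> v \<noteq> r then 1 else 0 :: real"
  have indegree: "(\<Sum>u\<in>V - {v}. ?x u v) = (if v = r then 0 else 1)" if "v \<in> V" for v
    using assms that by (cases "v = r") (simp_all add: sum.delta)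
  have x_feasible: "x_constraints V r ?x"
    unfolding x_constraints_def
  proof (intro conjI ballI allI impI)
    show "(\<Sum>u\<in>V - {v}. ?x u v) \<le> 1" if "v \<in> V" for v
      using indegree[OF that] by simp
    show "1 \<le> (\<Sum>u\<in>V - {v}. ?x u v)" if "v \<in> V - {r}" for v
      using indegree[of v] that by simp
    show "?x v w \<le> (\<Sum>u\<in>V - {v, w}. ?x u v)" if "v \<in> V - {r}" for v w
      using that by (simp add: sum_nonneg)
  qed simp_all
  show "P_HSTP V r H ?x
     (\<lambda>v i. if v = r then (if 1 \<le> i then 1 else 0) else (if 2 \<le> i then 1 else 0))
     (\<lambda>i v. if v = r then 0 else (if i = 0 then 1 else 0))"
    unfolding P_HSTP_def using x_feasible assms(3) by (intro conjI ballI allI impI) auto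
qed

lemma hstp_cost_nonneg:
  assumes "hmstp_instance V c r H" "x_constraints V r x"
  shows "0 \<le> hstp_cost V c x"
  unfolding hstp_cost_def
proof (rule sum_nonneg, clarify)
  fix u v assume "u \<in> V" "v \<in> V" "u \<noteq> v"
  then have "0 < c {u, v}" and "0 \<le> x u v"
    using assms unfolding hmstp_instance_def x_constraints_def by auto
  then show "0 \<le> c {u, v} * x u v" by simp
qed

lemma nu_A_le_cost:
  assumes hmstp: "hmstp_instance V c r H" and feasible: "A_HSTP V r H x y"
  shows "nu_A V c r H \<le> hstp_cost V c x"
proof -
  let ?costs = "{hstp_cost V c x | x y. A_HSTP V r H x y}"
  have "bdd_below ?costs"
  proof (rule bdd_belowI)
    fix s assume "s \<in> ?costs"
    then obtain x' y' where s: "s = hstp_cost V c x'" and A: "A_HSTP V r H x' y'" by blast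
    from A have "x_constraints V r x'" unfolding A_HSTP_def by (rule conjunct1)
    with s show "0 \<le> s" using hstp_cost_nonneg[OF hmstp] by simp
  qed
  moreover have "hstp_cost V c x \<in> ?costs" using feasible by blast
  ultimately show ?thesis unfolding nu_A_def by (simp add: cInf_lower)
qed

lemma le_nu_P:
  assumes hmstp: "hmstp_instance V c r H"
    and lower: "\<And>x l g. P_HSTP V r H x l g \<Longrightarrow> b \<le> hstp_cost V c x"
  shows "b \<le> nu_P V c r H"
proof -
  let ?costs = "{hstp_cost V c x | x l g. P_HSTP V r H x l g}"
  have "finite V" "r \<in> V" "1 \<le> H" using hmstp unfolding hmstp_instance_def by auto
  from P_HSTP_feasible[OF this] obtain x l g where "P_HSTP V r H x l g" by blast
  then have "?costs \<noteq> {}" by blast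
  moreover have "b \<le> s" if "s \<in> ?costs" for s
  proof -
    from that obtain x l g where "s = hstp_cost V c x" and "P_HSTP V r H x l g" by blast
    with lower show ?thesis by simp
  qed
  ultimately show ?thesis
    unfolding nu_P_def by (rule cInf_greatest)
qed

lemma nu_A_le_nu_P:
  assumes "hmstp_instance V c r H"
  shows "nu_A V c r H \<le> nu_P V c r H"
proof (rule le_nu_P[OF assms])
  fix x l g assume P: "P_HSTP V r H x l g"
  have "finite V" "r \<in> V" "1 \<le> H" using assms unfolding hmstp_instance_def by auto
  from P_HSTP_imp_A_HSTP[OF this P] obtain y where "A_HSTP V r H x y" ..
  then show "nu_A V c r H \<le> hstp_cost V c x" by (rule nu_A_le_cost[OF assms])
qed

lemma hstp_cost_eq:
  assumes "finite V"
  shows "hstp_cost V c x = (\<Sum>u\<in>V. \<Sum>v\<in>V - {u}. c {u, v} * x u v)"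
proof -
  have "{(u, v). u \<in> V \<and> v \<in> V \<and> u \<noteq> v} = Sigma V (\<lambda>u. V - {u})" by auto
  then show ?thesis unfolding hstp_cost_def using assms by (simp add: sum.Sigma)
qed

(* Edge costs c{0,1} = 9, c{0,2} = 10, c{0,3} = 7, c{1,2} = 8, c{1,3} = 9, c{2,3} = 6. *)
definition example_cost :: "nat set \<Rightarrow> real" where
  "example_cost S = (if 0 \<in> S then (if 1 \<in> S then 9 else if 2 \<in> S then 10 else 7)
     else if 1 \<in> S then (if 2 \<in> S then 8 else 9) else 6)"

definition example_x :: "nat \<Rightarrow> nat \<Rightarrow> real" where
  "example_x u v =
     (if u = 0 \<and> v = 3 then 2/3 else if u = 1 \<and> v = 2 then 1/3 else if u = 2 \<and> v = 1 then 2/3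
      else if u = 2 \<and> v = 3 then 1/3 else if u = 3 \<and> v = 1 then 1/3 else if u = 3 \<and> v = 2 then 2/3
      else 0)"

definition example_y :: "nat \<Rightarrow> nat \<Rightarrow> real" where
  "example_y v i = (if v = 0 then (if i = 0 then 1 else 0)
     else if v = 1 then (if i = 1 then 1/3 else if i = 2 then 2/3 else 0)
     else (if i = 1 then 2/3 else if i = 2 then 1/3 else 0))"

lemma example_instance: "hmstp_instance {0, 1, 2, 3} example_cost 0 2"
  unfolding hmstp_instance_def example_cost_def by auto

lemma example_A_HSTP: "A_HSTP {0, 1, 2, 3} 0 2 example_x example_y"
proof -
  have "{1..2::nat} = {1, 2}" by auto
  then show ?thesis
    unfolding A_HSTP_def x_constraints_def example_x_def example_y_def
    by (simp add: insert_Diff_if)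
qed

lemma example_cost_eq:
  "hstp_cost {0, 1, 2, 3} example_cost x =
     9 * x 0 1 + 10 * x 0 2 + 7 * x 0 3 + 9 * x 1 0 + 8 * x 1 2 + 9 * x 1 3 +
     10 * x 2 0 + 8 * x 2 1 + 6 * x 2 3 + 7 * x 3 0 + 9 * x 3 1 + 6 * x 3 2"
  by (simp add: hstp_cost_eq insert_Diff_if example_cost_def algebra_simps)

lemma example_A_cost: "hstp_cost {0, 1, 2, 3} example_cost example_x = 65/3"
  unfolding example_cost_eq by (simp add: example_x_def)

lemma example_P_cost_ge:
  assumes "P_HSTP {0, 1, 2, 3} 0 2 x l g"
  shows "22 \<le> hstp_cost {0, 1, 2, 3} example_cost x"
proof -
  interpret P_HSTP_point "{0, 1, 2, 3 :: nat}" 0 2 x l g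
    using assms by unfold_locales auto
  have "x 0 1 + x 2 1 + x 3 1 = 1" "x 0 2 + x 1 2 + x 3 2 = 1" "x 0 3 + x 1 3 + x 2 3 = 1"
    using indegree_eq_one[of 1] indegree_eq_one[of 2] indegree_eq_one[of 3]
    by (simp_all add: insert_Diff_if)
  moreover have "x 3 2 + x 2 1 \<le> 1" "x 2 3 + x 3 2 \<le> 1"
    using arc_pair_le_one[of 3 2 1] arc_pair_le_one[of 2 3 2] by simp_all
  moreover have "0 \<le> x 0 2" "0 \<le> x 1 3" "0 \<le> x 1 0" "0 \<le> x 2 0" "0 \<le> x 3 0"
    using arc_bounds by simp_all
  \<comment> \<open>by the in-degree equations the cost is 24 + 2 x02 + 2 x13 + 9 x10 + 10 x20 + 7 x30
      - (x32 + x21) - (x23 + x32)\<close>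
  ultimately show ?thesis
    unfolding example_cost_eq by linarith
qed

theorem theorem4:
  shows "(\<forall>(V :: 'a set) c r H. hmstp_instance V c r H \<longrightarrow> nu_P V c r H \<ge> nu_A V c r H) \<and>
         (\<exists>(V :: nat set) c r H. hmstp_instance V c r H \<and> nu_P V c r H > nu_A V c r H)"
proof (intro conjI allI impI exI)
  show "nu_A V c r H \<le> nu_P V c r H" if "hmstp_instance V c r H"
    for V :: "'a set" and c r H
    using nu_A_le_nu_P[OF that] .
  show "hmstp_instance {0, 1, 2, 3} example_cost 0 2" by (rule example_instance)
  have "nu_A {0, 1, 2, 3} example_cost 0 2 \<le> 65/3"
    using nu_A_le_cost[OF example_instance example_A_HSTP] example_A_cost by simp
  also have "\<dots> < 22" by simp
  also have "22 \<le> nu_P {0, 1, 2, 3} example_cost 0 2"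
    using le_nu_P[OF example_instance example_P_cost_ge] .
  finally show "nu_A {0, 1, 2, 3} example_cost 0 2 < nu_P {0, 1, 2, 3} example_cost 0 2" .
qed

end
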